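(* Let $G$ be a Polish group, $X$ a Polish space with a continuous $G$-action, and $F\subseteq E^X_G$ a Borel equivalence relation on $X$ such that each $E^X_G$-class contains at most countably many $F$-classes. Then $E^X_G$ is a Borel subset of $X\times X$.
   Context: $E^X_G=\{(x,y):\exists g\in G\ g\cdot x=y\}$ is the orbit equivalence relation. *)

theory Defs
  imports "HOL-Analysis.Analysis"
begin

definition polish_group :: "('g::polish_space \<Rightarrow> 'g \<Rightarrow> 'g) \<Rightarrow> 'g \<Rightarrow> ('g \<Rightarrow> 'g) \<Rightarrow> bool" where
  "polish_group gm e gi \<longleftrightarrow>
     (\<forall>a b c. gm (gm a b) c = gm a (gm b c)) \<and>
     (\<forall>a. gm e a = a \<and> gm a e = a) \<and>
     (\<forall>a. gm (gi a) a = e \<and> gm a (gi a) = e) \<and>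
     continuous_on UNIV (\<lambda>p. gm (fst p) (snd p)) \<and>
     continuous_on UNIV gi"

definition continuous_group_action ::
  "('g \<Rightarrow> 'g \<Rightarrow> 'g) \<Rightarrow> 'g \<Rightarrow> ('g::topological_space \<Rightarrow> 'x::topological_space \<Rightarrow> 'x) \<Rightarrow> bool" where
  "continuous_group_action gm e act \<longleftrightarrow>
     (\<forall>x. act e x = x) \<and>
     (\<forall>g h x. act (gm g h) x = act g (act h x)) \<and>
     continuous_on UNIV (\<lambda>p. act (fst p) (snd p))"

definition orbit_eqrel :: "('g \<Rightarrow> 'x \<Rightarrow> 'x) \<Rightarrow> ('x \<times> 'x) set" where
  "orbit_eqrel act = {(x, y). \<exists>g. act g x = y}"

end

theory Submission
  imports Defs
begin

text \<open>
  For \<open>(x, y) \<in> X \<times> X\<close> let \<open>Q(x, y) = {(g, h). (g x, h y) \<in> F}\<close> (the section of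
  \<open>related_translates F\<close>); these are the sections of a Borel subset of \<open>(X \<times> X) \<times> (G \<times> G)\<close>.
  Since \<open>F \<subseteq> E\<close>, a nonempty \<open>Q(x, y)\<close> forces \<open>(x, y) \<in> E\<close>. Conversely, if \<open>y = k x\<close>, the
  sets \<open>{g. g x \<in> C}\<close>, \<open>C\<close> ranging over the countably many \<open>F\<close>-classes in the orbit, are Borel
  and cover \<open>G\<close>; by the Baire category theorem one of them is comeager in a nonempty open \<open>U\<close>,
  and then \<open>Q(x, y)\<close> is comeager in \<open>U \<times> U k\<^sup>-\<^sup>1\<close>. So \<open>(x, y) \<in> E\<close> iff \<open>Q(x, y)\<close> is comeager in
  some nonempty basic open subset of \<open>G \<times> G\<close>, and by Montgomery's theorem (for Borel \<open>B\<close> and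
  open \<open>U\<close>, the set of \<open>z\<close> whose section \<open>B\<^sub>z\<close> is comeager in \<open>U\<close> is Borel) this is a countable
  union of Borel sets.
\<close>

definition meager :: "'a::topological_space set \<Rightarrow> bool" where
  "meager S \<longleftrightarrow> (\<exists>\<N>. countable \<N> \<and> (\<forall>N\<in>\<N>. closed N \<and> interior N = {}) \<and> S \<subseteq> \<Union>\<N>)"

lemma meager_subset: "meager T \<Longrightarrow> S \<subseteq> T \<Longrightarrow> meager S"
  unfolding meager_def by (meson order.trans)

lemma meager_empty: "meager {}"
  unfolding meager_def by (rule exI[of _ "{}"]) auto

lemma meager_closed_interior_empty: "closed N \<Longrightarrow> interior N = {} \<Longrightarrow> meager N"
  unfolding meager_def by (rule exI[of _ "{N}"]) auto

lemma meager_UN: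
  assumes "countable I" "\<And>i. i \<in> I \<Longrightarrow> meager (A i)"
  shows "meager (\<Union>i\<in>I. A i)"
proof -
  obtain NN where NN: "\<And>i. i \<in> I \<Longrightarrow>
      countable (NN i) \<and> (\<forall>N\<in>NN i. closed N \<and> interior N = {}) \<and> A i \<subseteq> \<Union>(NN i)"
    using assms(2) unfolding meager_def by metis
  show ?thesis unfolding meager_def
    by (rule exI[of _ "\<Union>i\<in>I. NN i"]) (use NN assms(1) in fastforce)
qed

lemma meager_Un: "meager A \<Longrightarrow> meager B \<Longrightarrow> meager (A \<union> B)"
  using meager_UN[of "{A, B}" id] by auto

lemma open_not_meager:
  fixes U :: "'a::complete_space set"
  assumes "open U" "U \<noteq> {}"
  shows "\<not> meager U"
proof
  assume "meager U"
  then obtain \<N> where N: "countable \<N>" "\<forall>N\<in>\<N>. closed N \<and> interior N = {}" "U \<subseteq> \<Union>\<N>"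
    unfolding meager_def by blast
  have "euclidean interior_of \<Union>\<N> = {}"
    by (rule Baire_category_alt) (use N completely_metrizable_space_euclidean in auto)
  moreover have "U \<subseteq> interior (\<Union>\<N>)" using N(3) assms(1) interior_maximal by blast
  ultimately show False using assms(2) by simp
qed

lemma meager_Times_UNIV: "meager M \<Longrightarrow> meager (M \<times> (UNIV :: 'b::topological_space set))"
  unfolding meager_def
  by (elim exE, rule_tac x = "(\<lambda>N. N \<times> UNIV) ` \<N>" in exI) (auto simp: interior_Times closed_Times)

lemma meager_UNIV_Times: "meager M \<Longrightarrow> meager ((UNIV :: 'b::topological_space set) \<times> M)"
  unfolding meager_def
  by (elim exE, rule_tac x = "(\<lambda>N. UNIV \<times> N) ` \<N>" in exI) (auto simp: interior_Times closed_Times)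

lemma meager_vimage_homeomorphism:
  assumes "homeomorphism UNIV UNIV f g" "meager S"
  shows "meager (f -` S)"
proof -
  have f: "continuous_on UNIV f" and g: "continuous_on UNIV g"
    and fg: "\<And>y. f (g y) = y" and gf: "\<And>x. g (f x) = x"
    using assms(1) unfolding homeomorphism_def by auto
  obtain \<N> where N: "countable \<N>" "\<forall>N\<in>\<N>. closed N \<and> interior N = {}" "S \<subseteq> \<Union>\<N>"
    using assms(2) unfolding meager_def by blast
  have "interior (f -` N) = {}" if "N \<in> \<N>" for N
  proof -
    have "open (g -` interior (f -` N))" using g by (intro open_vimage) auto
    moreover have "g -` interior (f -` N) \<subseteq> N" using interior_subset[of "f -` N"] fg by auto
    ultimately have "g -` interior (f -` N) \<subseteq> interior N" using interior_maximal by blast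
    moreover have "f x \<in> g -` interior (f -` N)" if "x \<in> interior (f -` N)" for x
      using that gf by simp
    ultimately show ?thesis using N(2) \<open>N \<in> \<N>\<close> by blast
  qed
  moreover have "f -` S \<subseteq> \<Union>((\<lambda>N. f -` N) ` \<N>)" using N(3) by blast
  ultimately show ?thesis unfolding meager_def
    by (intro exI[of _ "(\<lambda>N. f -` N) ` \<N>"]) (use N f in \<open>auto intro: closed_vimage\<close>)
qed

definition baire_property :: "'a::topological_space set \<Rightarrow> bool" where
  "baire_property S \<longleftrightarrow> (\<exists>V. open V \<and> meager ((S - V) \<union> (V - S)))"

lemma baire_property_open: "open S \<Longrightarrow> baire_property S"
  unfolding baire_property_def by (rule exI[of _ S]) (auto simp: meager_empty)

lemma baire_property_Compl:
  assumes "baire_property S" shows "baire_property (- S)"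
proof -
  obtain V where V: "open V" "meager ((S - V) \<union> (V - S))"
    using assms unfolding baire_property_def by blast
  define K where "K = - V - interior (- V)"
  have "interior K \<subseteq> interior (- V)" unfolding K_def by (rule interior_mono) auto
  then have "interior K = {}" using interior_subset[of K] unfolding K_def by blast
  moreover have "closed K" unfolding K_def using V(1) by (intro closed_Diff) (auto simp: open_closed)
  ultimately have "meager (((S - V) \<union> (V - S)) \<union> K)"
    using V(2) meager_Un meager_closed_interior_empty by blast
  moreover have "(- S - interior (- V)) \<union> (interior (- V) - - S) \<subseteq> ((S - V) \<union> (V - S)) \<union> K"
    unfolding K_def using interior_subset[of "- V"] by blast
  ultimately show ?thesis unfolding baire_property_def
    by (intro exI[of _ "interior (- V)"]) (auto intro: meager_subset)
qed

lemma baire_property_UN: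
  assumes "\<And>n::nat. baire_property (A n)" shows "baire_property (\<Union>n. A n)"
proof -
  obtain V where V: "\<And>n. open (V n) \<and> meager ((A n - V n) \<union> (V n - A n))"
    using assms unfolding baire_property_def by metis
  have "meager (\<Union>n. (A n - V n) \<union> (V n - A n))" by (rule meager_UN) (use V in auto)
  moreover have "((\<Union>n. A n) - (\<Union>n. V n)) \<union> ((\<Union>n. V n) - (\<Union>n. A n))
      \<subseteq> (\<Union>n. (A n - V n) \<union> (V n - A n))"
    by blast
  ultimately show ?thesis unfolding baire_property_def
    by (intro exI[of _ "\<Union>n. V n"]) (use V in \<open>auto intro: meager_subset\<close>)
qed

lemma baire_property_borel:
  assumes "S \<in> sets borel" shows "baire_property S"
proof -
  have "S \<in> sigma_sets UNIV {S. open S}" using assms by (simp add: sets_borel)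
  then show ?thesis
  proof induction
    case (Compl a) then show ?case using baire_property_Compl by (metis Compl_eq_Diff_UNIV)
  qed (auto intro: baire_property_open baire_property_UN)
qed

lemma baire_property_nonmeager_open:
  assumes "baire_property S" "open U" "\<not> meager (U \<inter> S)"
  shows "\<exists>W. open W \<and> W \<noteq> {} \<and> W \<subseteq> U \<and> meager (W - S)"
proof -
  obtain V where V: "open V" "meager ((S - V) \<union> (V - S))"
    using assms(1) unfolding baire_property_def by blast
  have "U \<inter> S \<subseteq> (S - V) \<union> (V - S)" if "U \<inter> V = {}" using that by blast
  then have "U \<inter> V \<noteq> {}" using assms(3) V(2) meager_subset by blast
  moreover have "U \<inter> V - S \<subseteq> (S - V) \<union> (V - S)" by blast
  ultimately show ?thesis using assms(2) V meager_subset by (intro exI[of _ "U \<inter> V"]) auto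
qed

lemma baire_property_nonmeager_basis:
  assumes "topological_basis Bs" "baire_property S" "open U" "\<not> meager (U \<inter> S)"
  shows "\<exists>W\<in>Bs. W \<noteq> {} \<and> W \<subseteq> U \<and> meager (W - S)"
proof -
  obtain V x where V: "open V" "x \<in> V" "V \<subseteq> U" "meager (V - S)"
    using baire_property_nonmeager_open[OF assms(2-4)] by blast
  then obtain W where "W \<in> Bs" "x \<in> W" "W \<subseteq> V"
    using topological_basisE[OF assms(1)] by metis
  then show ?thesis using V meager_subset[of "V - S" "W - S"] by blast
qed

lemma baire_countable_cover:
  fixes A :: "'i \<Rightarrow> 'a::complete_space set"
  assumes "countable I" "\<And>i. i \<in> I \<Longrightarrow> baire_property (A i)" "(\<Union>i\<in>I. A i) = UNIV"
  shows "\<exists>i\<in>I. \<exists>U. open U \<and> U \<noteq> {} \<and> meager (U - A i)"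
proof -
  have "\<exists>i\<in>I. \<not> meager (A i)"
  proof (rule ccontr)
    assume "\<not> (\<exists>i\<in>I. \<not> meager (A i))"
    then have "meager (\<Union>i\<in>I. A i)" using meager_UN[OF assms(1)] by blast
    then show False using open_not_meager[of "UNIV :: 'a set"] assms(3) by simp
  qed
  then show ?thesis using baire_property_nonmeager_open[OF assms(2) open_UNIV] by fastforce
qed

lemma meager_Int_iff_basis:
  fixes S :: "'a::complete_space set"
  assumes "topological_basis Bs" "baire_property S" "open U"
  shows "meager (U \<inter> S) \<longleftrightarrow> (\<forall>W\<in>Bs. W \<noteq> {} \<and> W \<subseteq> U \<longrightarrow> \<not> meager (W - S))"
proof
  assume "meager (U \<inter> S)"
  moreover have "W \<subseteq> (W - S) \<union> (U \<inter> S)" if "W \<subseteq> U" for W using that by blast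
  ultimately show "\<forall>W\<in>Bs. W \<noteq> {} \<and> W \<subseteq> U \<longrightarrow> \<not> meager (W - S)"
    using open_not_meager topological_basis_open[OF assms(1)] meager_Un meager_subset by metis
next
  assume "\<forall>W\<in>Bs. W \<noteq> {} \<and> W \<subseteq> U \<longrightarrow> \<not> meager (W - S)"
  then show "meager (U \<inter> S)" using baire_property_nonmeager_basis[OF assms] by blast
qed

lemma meager_Diff_Union_iff_basis:
  fixes A :: "nat \<Rightarrow> 'a::complete_space set"
  assumes "topological_basis Bs" "\<And>n. baire_property (A n)" "open U"
  shows "meager (U - (\<Union>n. A n)) \<longleftrightarrow>
    (\<forall>W\<in>Bs. W \<noteq> {} \<and> W \<subseteq> U \<longrightarrow> (\<exists>n. \<exists>V\<in>Bs. V \<noteq> {} \<and> V \<subseteq> W \<and> meager (V - A n)))"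
proof
  assume m: "meager (U - (\<Union>n. A n))"
  show "\<forall>W\<in>Bs. W \<noteq> {} \<and> W \<subseteq> U \<longrightarrow> (\<exists>n. \<exists>V\<in>Bs. V \<noteq> {} \<and> V \<subseteq> W \<and> meager (V - A n))"
  proof (intro ballI impI)
    fix W assume W: "W \<in> Bs" "W \<noteq> {} \<and> W \<subseteq> U"
    have oW: "open W" using W(1) assms(1) topological_basis_open by blast
    have "\<exists>n. \<not> meager (W \<inter> A n)"
    proof (rule ccontr)
      assume "\<not> (\<exists>n. \<not> meager (W \<inter> A n))"
      then have "meager (\<Union>n. W \<inter> A n)" by (intro meager_UN) auto
      then have "meager ((U - (\<Union>n. A n)) \<union> (\<Union>n. W \<inter> A n))" by (rule meager_Un[OF m])
      moreover have "W \<subseteq> (U - (\<Union>n. A n)) \<union> (\<Union>n. W \<inter> A n)" using W by blast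
      ultimately have "meager W" by (rule meager_subset)
      then show False using open_not_meager oW W(2) by blast
    qed
    then obtain n where "\<not> meager (W \<inter> A n)" by blast
    then obtain V where "V\<in>Bs" "V \<noteq> {}" "V \<subseteq> W" "meager (V - A n)"
      using baire_property_nonmeager_basis[OF assms(1) assms(2) oW] by blast
    then show "\<exists>n. \<exists>V\<in>Bs. V \<noteq> {} \<and> V \<subseteq> W \<and> meager (V - A n)" by blast
  qed
next
  assume h: "\<forall>W\<in>Bs. W \<noteq> {} \<and> W \<subseteq> U \<longrightarrow> (\<exists>n. \<exists>V\<in>Bs. V \<noteq> {} \<and> V \<subseteq> W \<and> meager (V - A n))"
  show "meager (U - (\<Union>n. A n))"
  proof (rule ccontr)
    assume nm: "\<not> meager (U - (\<Union>n. A n))"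
    have "baire_property (- (\<Union>n. A n))" by (intro baire_property_Compl baire_property_UN assms(2))
    moreover have "U \<inter> - (\<Union>n. A n) = U - (\<Union>n. A n)" by blast
    ultimately obtain W where W: "W\<in>Bs" "W \<noteq> {}" "W \<subseteq> U" "meager (W - - (\<Union>n. A n))"
      using baire_property_nonmeager_basis[OF assms(1) _ assms(3), of "- (\<Union>n. A n)"] nm by auto
    then obtain n V where V: "V\<in>Bs" "V \<noteq> {}" "V \<subseteq> W" "meager (V - A n)" using h by blast
    have "V \<subseteq> (V - A n) \<union> (W - - (\<Union>n. A n))" using V by blast
    then have "meager V" by (rule meager_subset[OF meager_Un[OF V(4) W(4)]])
    moreover have "open V" using V(1) assms(1) topological_basis_open by blast
    ultimately show False using open_not_meager V(2) by blast
  qed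
qed

text \<open>Montgomery's theorem, by induction over the generators of the product \<open>\<sigma>\<close>-algebra; the
  two characterisations above turn complements and countable unions of sections into countable
  Boolean combinations over the basis.\<close>
lemma sets_Collect_meager_section:
  fixes B :: "('z \<times> 'y::complete_space) set"
  assumes Bs: "countable Bs" "topological_basis Bs" and "B \<in> sets (M \<Otimes>\<^sub>M borel)"
  shows "\<forall>U\<in>Bs. {z\<in>space M. meager (U - Pair z -` B)} \<in> sets M"
proof -
  have open_Bs: "\<And>U. U \<in> Bs \<Longrightarrow> open U" using Bs(2) topological_basis_open by blast
  have "B \<in> sigma_sets (space M \<times> space borel) {a \<times> b | a b. a \<in> sets M \<and> b \<in> sets borel}"
    using assms(3) by (simp add: sets_pair_measure)
  then show ?thesis
  proof induction
    case (Basic ab)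
    then obtain a b where ab: "ab = a \<times> b" "a \<in> sets M" by blast
    have "{z\<in>space M. meager (U - Pair z -` ab)} =
        {z\<in>space M. (z \<in> a \<and> meager (U - b)) \<or> (z \<notin> a \<and> meager U)}" for U
      using ab(1) by auto
    moreover have "{z\<in>space M. (z \<in> a \<and> meager (U - b)) \<or> (z \<notin> a \<and> meager U)} \<in> sets M" for U
      using ab(2) by measurable
    ultimately show ?case by simp
  next
    case Empty
    then show ?case by (simp add: sets.sets_Collect_const)
  next
    case (Compl a)
    have section_borel: "Pair z -` a \<in> sets borel" for z
      using Compl(1) sets_Pair1[of a M borel z] by (simp add: sets_pair_measure)
    have "{z\<in>space M. meager (U - Pair z -` (space M \<times> space borel - a))} =
        {z\<in>space M. \<forall>W\<in>{W\<in>Bs. W \<noteq> {} \<and> W \<subseteq> U}. \<not> meager (W - Pair z -` a)}" if "U \<in> Bs" for U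
    proof -
      have "U - Pair z -` (space M \<times> space borel - a) = U \<inter> Pair z -` a" if "z \<in> space M" for z
        using that by auto
      then show ?thesis
        using meager_Int_iff_basis[OF Bs(2) baire_property_borel[OF section_borel] open_Bs[OF that]] by auto
    qed
    moreover have "{z\<in>space M. \<forall>W\<in>{W\<in>Bs. W \<noteq> {} \<and> W \<subseteq> U}. \<not> meager (W - Pair z -` a)} \<in> sets M"
      if "U \<in> Bs" for U
      using Compl(2) Bs(1) by (intro sets.sets_Collect_countable_All' sets.sets_Collect_neg) auto
    ultimately show ?case by simp
  next
    case (Union A)
    have section_borel: "Pair z -` A n \<in> sets borel" for z n
      using Union(1) sets_Pair1[of "A n" M borel z] by (simp add: sets_pair_measure)
    have "{z\<in>space M. meager (U - Pair z -` \<Union>(range A))} =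
        {z\<in>space M. \<forall>W\<in>{W\<in>Bs. W \<noteq> {} \<and> W \<subseteq> U}. \<exists>n\<in>UNIV.
           \<exists>V\<in>{V\<in>Bs. V \<noteq> {} \<and> V \<subseteq> W}. meager (V - Pair z -` A n)}" if "U \<in> Bs" for U
    proof -
      have "Pair z -` \<Union>(range A) = (\<Union>n. Pair z -` A n)" for z by auto
      then have "meager (U - Pair z -` \<Union>(range A)) \<longleftrightarrow> (\<forall>W\<in>Bs. W \<noteq> {} \<and> W \<subseteq> U \<longrightarrow>
          (\<exists>n. \<exists>V\<in>Bs. V \<noteq> {} \<and> V \<subseteq> W \<and> meager (V - Pair z -` A n)))" for z
        by (simp only:) (rule meager_Diff_Union_iff_basis[OF Bs(2), of "\<lambda>n. Pair z -` A n",
            OF baire_property_borel[OF section_borel] open_Bs[OF that]])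
      then have "meager (U - Pair z -` \<Union>(range A)) \<longleftrightarrow> (\<forall>W\<in>{W\<in>Bs. W \<noteq> {} \<and> W \<subseteq> U}.
          \<exists>n\<in>UNIV. \<exists>V\<in>{V\<in>Bs. V \<noteq> {} \<and> V \<subseteq> W}. meager (V - Pair z -` A n))" for z
        by (simp only: Ball_def Bex_def mem_Collect_eq UNIV_I simp_thms) meson
      then show ?thesis by simp
    qed
    moreover have "{z\<in>space M. \<forall>W\<in>{W\<in>Bs. W \<noteq> {} \<and> W \<subseteq> U}. \<exists>n\<in>UNIV.
           \<exists>V\<in>{V\<in>Bs. V \<noteq> {} \<and> V \<subseteq> W}. meager (V - Pair z -` A n)} \<in> sets M" for U
      using Union(2) Bs(1)
      by (intro sets.sets_Collect_countable_All' sets.sets_Collect_countable_Ex') auto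
    ultimately show ?case by simp
  qed
qed

lemma continuous_on_apply2:
  assumes "continuous_on UNIV (\<lambda>p. f (fst p) (snd p))" "continuous_on UNIV a" "continuous_on UNIV b"
  shows "continuous_on UNIV (\<lambda>x. f (a x) (b x))"
  using continuous_on_compose2[OF assms(1) continuous_on_Pair[OF assms(2,3)]] by simp

locale polish_group_action =
  fixes gm :: "'g::polish_space \<Rightarrow> 'g \<Rightarrow> 'g" and e :: 'g and gi :: "'g \<Rightarrow> 'g"
    and act :: "'g \<Rightarrow> 'x::polish_space \<Rightarrow> 'x"
  assumes group: "polish_group gm e gi"
    and action: "continuous_group_action gm e act"
begin

lemma act_mult: "act (gm g h) x = act g (act h x)"
  using action unfolding continuous_group_action_def by blast

lemma act_unit: "act e x = x"
  using action unfolding continuous_group_action_def by blast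

lemma continuous_on_act: "continuous_on UNIV a \<Longrightarrow> continuous_on UNIV b \<Longrightarrow>
    continuous_on UNIV (\<lambda>t. act (a t) (b t))"
  using action unfolding continuous_group_action_def by (blast intro: continuous_on_apply2)

lemma homeomorphism_right_mult: "homeomorphism UNIV UNIV (\<lambda>h. gm h k) (\<lambda>h. gm h (gi k))"
proof
  have "continuous_on UNIV (\<lambda>p. gm (fst p) (snd p))"
    using group unfolding polish_group_def by blast
  then show "continuous_on UNIV (\<lambda>h. gm h k)" "continuous_on UNIV (\<lambda>h. gm h (gi k))"
    by (auto intro: continuous_on_apply2 continuous_intros)
qed (use group in \<open>auto simp: polish_group_def\<close>)

lemma orbit_eqrel_act_cancel:
  assumes "(act g x, act h y) \<in> orbit_eqrel act"
  shows "(x, y) \<in> orbit_eqrel act"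
proof -
  obtain k where k: "act k (act g x) = act h y"
    using assms unfolding orbit_eqrel_def by auto
  have "act (gm (gi h) (gm k g)) x = act (gm (gi h) h) y"
    using k by (simp add: act_mult)
  also have "\<dots> = y" using group by (simp add: polish_group_def act_unit)
  finally show ?thesis unfolding orbit_eqrel_def by blast
qed

definition related_translates :: "('x \<times> 'x) set \<Rightarrow> (('x \<times> 'x) \<times> ('g \<times> 'g)) set" where
  "related_translates F = {((x, y), (g, h)). (act g x, act h y) \<in> F}"

lemma related_translates_borel:
  assumes "F \<in> sets borel"
  shows "related_translates F \<in> sets (borel \<Otimes>\<^sub>M borel)"
proof -
  let ?\<phi> = "\<lambda>p :: ('x \<times> 'x) \<times> ('g \<times> 'g). (act (fst (snd p)) (fst (fst p)), act (snd (snd p)) (snd (fst p)))"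
  have "continuous_on UNIV ?\<phi>"
    by (intro continuous_on_Pair continuous_on_act) (auto intro!: continuous_intros)
  then have "?\<phi> -` F \<inter> space borel \<in> sets borel"
    using assms by (intro measurable_sets[OF borel_measurable_continuous_onI])
  moreover have "related_translates F = ?\<phi> -` F \<inter> space borel"
    unfolding related_translates_def by auto
  ultimately show ?thesis unfolding borel_prod by simp
qed

lemma comeager_class_of_orbit_map:
  assumes "F \<in> sets borel" "\<And>a. (a, a) \<in> F"
    and "countable {F `` {y} | y. (x, y) \<in> orbit_eqrel act}"
  shows "\<exists>w U. open U \<and> U \<noteq> {} \<and> meager (U - {g. (w, act g x) \<in> F})"
proof -
  define Cs where "Cs = {F `` {y} | y. (x, y) \<in> orbit_eqrel act}"
  have cover: "(\<Union>C\<in>Cs. {g. act g x \<in> C}) = UNIV"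
  proof -
    have "g \<in> {g'. act g' x \<in> F `` {act g x}}" "F `` {act g x} \<in> Cs" for g
      unfolding Cs_def orbit_eqrel_def using assms(2) by auto
    then show ?thesis by blast
  qed
  have "baire_property {g. act g x \<in> F `` {w}}" for w
  proof -
    have "F `` {w} \<in> sets borel"
      using sets_Pair1[of F borel borel w] assms(1) by (simp add: borel_prod Image_singleton vimage_def)
    then have "(\<lambda>g. act g x) -` (F `` {w}) \<inter> space borel \<in> sets borel"
      by (intro measurable_sets[OF borel_measurable_continuous_onI] continuous_on_act)
        (auto intro: continuous_intros)
    then show ?thesis by (simp add: vimage_def baire_property_borel)
  qed
  then have "\<And>C. C \<in> Cs \<Longrightarrow> baire_property {g. act g x \<in> C}"
    unfolding Cs_def by blast
  with cover assms(3) obtain C U where "C \<in> Cs" "open U" "U \<noteq> {}" "meager (U - {g. act g x \<in> C})"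
    using baire_countable_cover[of Cs "\<lambda>C. {g. act g x \<in> C}"] unfolding Cs_def by blast
  moreover obtain w where "C = F `` {w}" using \<open>C \<in> Cs\<close> unfolding Cs_def by blast
  moreover have "{g. act g x \<in> F `` {w}} = {g. (w, act g x) \<in> F}" by blast
  ultimately show ?thesis by metis
qed

lemma comeager_related_translates_section:
  assumes "equiv UNIV F" "F \<in> sets borel"
    and "countable {F `` {y} | y. (x, y) \<in> orbit_eqrel act}" and "y = act k x"
  shows "\<exists>U V. open U \<and> open V \<and> U \<noteq> {} \<and> V \<noteq> {} \<and>
    meager (U \<times> V - Pair (x, y) -` related_translates F)"
proof -
  have refl: "(a, a) \<in> F" for a using assms(1) unfolding equiv_def refl_on_def by blast
  have rel: "(a, b) \<in> F" if "(w, a) \<in> F" "(w, b) \<in> F" for w a b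
    using assms(1) that unfolding equiv_def sym_def trans_def by blast
  obtain w U where U: "open U" "U \<noteq> {}" and mU: "meager (U - {g. (w, act g x) \<in> F})"
    using comeager_class_of_orbit_map[OF assms(2) refl assms(3)] by blast
  define r where "r h = gm h k" for h
  have hom: "homeomorphism UNIV UNIV r (\<lambda>h. gm h (gi k))"
    unfolding r_def by (rule homeomorphism_right_mult)
  define V where "V = r -` U"
  have "open V" unfolding V_def using hom U(1)
    by (intro open_vimage) (auto simp: homeomorphism_def)
  moreover have "V \<noteq> {}"
  proof -
    obtain u where "u \<in> U" using U(2) by blast
    moreover have "r (gm u (gi k)) = u" using hom unfolding homeomorphism_def by blast
    ultimately show ?thesis unfolding V_def by blast
  qed
  \<comment> \<open>right translation by \<open>k\<close> maps the \<open>g\<close> with \<open>g y \<in> [w]\<^sub>F\<close> onto those with \<open>g x \<in> [w]\<^sub>F\<close>\<close>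
  moreover have mV: "meager (V - {h. (w, act h y) \<in> F})"
  proof -
    have "V - {h. (w, act h y) \<in> F} = r -` (U - {g. (w, act g x) \<in> F})"
      unfolding V_def r_def assms(4) by (auto simp: act_mult)
    then show ?thesis using meager_vimage_homeomorphism[OF hom mU] by simp
  qed
  moreover have "U \<times> V - Pair (x, y) -` related_translates F
      \<subseteq> (U - {g. (w, act g x) \<in> F}) \<times> UNIV \<union> UNIV \<times> (V - {h. (w, act h y) \<in> F})"
    unfolding related_translates_def using rel by auto
  ultimately show ?thesis
    using U meager_Un[OF meager_Times_UNIV[OF mU] meager_UNIV_Times[OF mV]] meager_subset by blast
qed

lemma orbit_eqrel_iff_meager_section:
  assumes "equiv UNIV F" "F \<in> sets borel" "F \<subseteq> orbit_eqrel act"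
    and "\<forall>x. countable {F `` {y} | y. (x, y) \<in> orbit_eqrel act}"
    and basis: "topological_basis Bs"
  shows "z \<in> orbit_eqrel act \<longleftrightarrow> (\<exists>W\<in>Bs. W \<noteq> {} \<and> meager (W - Pair z -` related_translates F))"
proof
  obtain x y where z: "z = (x, y)" by fastforce
  assume "z \<in> orbit_eqrel act"
  then obtain k where "y = act k x" using z unfolding orbit_eqrel_def by auto
  then obtain U V where UV: "open U" "open V" "U \<noteq> {}" "V \<noteq> {}"
    and m: "meager (U \<times> V - Pair z -` related_translates F)"
    using comeager_related_translates_section[OF assms(1,2) spec[OF assms(4), of x]] z by blast
  obtain u v where uv: "(u, v) \<in> U \<times> V" using UV(3,4) by blast
  obtain W where W: "W \<in> Bs" "(u, v) \<in> W" "W \<subseteq> U \<times> V"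
    by (rule topological_basisE[OF basis open_Times[OF UV(1,2)] uv])
  have "W - Pair z -` related_translates F \<subseteq> U \<times> V - Pair z -` related_translates F"
    using W(3) by blast
  then show "\<exists>W\<in>Bs. W \<noteq> {} \<and> meager (W - Pair z -` related_translates F)"
    using meager_subset[OF m] W(1,2) by blast
next
  assume "\<exists>W\<in>Bs. W \<noteq> {} \<and> meager (W - Pair z -` related_translates F)"
  then obtain W where W: "W \<in> Bs" "W \<noteq> {}" "meager (W - Pair z -` related_translates F)"
    by blast
  have "\<not> meager W" using open_not_meager[OF topological_basis_open[OF basis W(1)] W(2)] .
  have "W \<inter> Pair z -` related_translates F \<noteq> {}"
  proof
    assume "W \<inter> Pair z -` related_translates F = {}"
    then have "W - Pair z -` related_translates F = W" by blast
    then show False using W(3) \<open>\<not> meager W\<close> by simp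
  qed
  then obtain x y g h where "z = (x, y)" "(act g x, act h y) \<in> F"
    unfolding related_translates_def by auto
  then show "z \<in> orbit_eqrel act" using assms(3) orbit_eqrel_act_cancel by blast
qed

end

theorem mainTheorem9:
  fixes gm :: "'g::polish_space \<Rightarrow> 'g \<Rightarrow> 'g" and e :: 'g and gi :: "'g \<Rightarrow> 'g"
    and act :: "'g \<Rightarrow> 'x::polish_space \<Rightarrow> 'x"
    and F :: "('x \<times> 'x) set"
  assumes "polish_group gm e gi"
    and "continuous_group_action gm e act"
    and "equiv UNIV F"
    and "F \<in> sets borel"
    and "F \<subseteq> orbit_eqrel act"
    and "\<forall>x. countable {F `` {y} | y. (x, y) \<in> orbit_eqrel act}"
  shows "orbit_eqrel act \<in> sets borel"
proof -
  interpret polish_group_action gm e gi act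
    using assms(1,2) by unfold_locales
  obtain Bs :: "('g \<times> 'g) set set" where Bs: "countable Bs" "topological_basis Bs"
    using ex_countable_basis by blast
  have "orbit_eqrel act =
      (\<Union>W\<in>{W\<in>Bs. W \<noteq> {}}. {z\<in>space borel. meager (W - Pair z -` related_translates F)})"
    using orbit_eqrel_iff_meager_section[OF assms(3-6) Bs(2)] by auto
  also have "\<dots> \<in> sets borel"
    using sets_Collect_meager_section[OF Bs related_translates_borel[OF assms(4)]] Bs(1)
    by (intro sets.countable_UN') auto
  finally show ?thesis .
qed

end
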